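(* Let $(A,B)$ be a Katsura pair with $B\in M_N(\{0,1\})$ such that the KEP-action $(G_B,E_A)$ is regular. Suppose $v=(v_k)\in E_C^{-\infty}$ satisfies $B_{v_{k-1},v_k}=1$ for all $k<0$. Then for $\mu,\nu\in X_v$, $\mu\sim_{ae}\nu$ if and only if $C_v(\iota_v(\mu))=C_v(\iota_v(\nu))$.
   Context: Katsura pair: $N\in\mathbb{N}$, $A\in M_N(\mathbb{N})$ (nonnegative integers), $B\in M_N(\mathbb{Z})$ with $A_{ij}=0\Rightarrow B_{ij}=0$. Graph $E_A$: vertices $\{1,\dots,N\}$, edges $e_{i,j,m}$ ($0\le m<A_{ij}$), $r=i$, $s=j$; $E_A^{-\infty}$ left-infinite paths $\cdots\mu_{-2}\mu_{-1}$ with $s(\mu_k)=r(\mu_{k+1})$. The group bundle $\mathbb{Z}\times E_A^0$ (elements $a_i^k$) acts by $a_i^k\cdot e_{i,j,m}=e_{i,j,\hat m}$, $a_i^k|_{e_{i,j,m}}=a_j^{\hat k}$ where $kB_{ij}+m=\hat kA_{ij}+\hat m$, $0\le\hat m<A_{ij}$, extended recursively to finite paths; $G_B$ is the faithful quotient and $(G_B,E_A)$ the KEP-action. Regular: for every $g\in G_B$ there is $K$ such that $g\cdot\mu=\mu$, $|\mu|\ge K$ imply $g|_\mu$ is the unit at $s(\mu)$. $\mu\sim_{ae}\nu$ iff there are a finite $F\subseteq G_B$ and $(g_n)_{n<0}\subseteq F$ with $d(g_n)=r(\mu_n)$ and $g_n\cdot\mu_n\cdots\mu_{-1}=\nu_n\cdots\nu_{-1}$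 for all $n<0$. $C$ is the connectivity matrix of $E_A$ ($C_{ij}=1$ if $A_{ij}>0$, else $0$) with graph $E_C$; an element $v\in E_C^{-\infty}$ is encoded by its vertex sequence $(v_k)_{k\le-1}$, $v_k$ the source of the $k$-th edge and $v_{k-1}$ its range. $A_{v[k,-1]}=\prod_{j=k}^{-1}A_{v_{j-1},v_j}$. $X_v=\{\mu\in E_A^{-\infty}: s(\mu_k)=v_k\ \forall k<0\}$, $\mathcal{A}_v=\prod_{k<0}\{0,\dots,A_{v_{k-1},v_k}-1\}$, and $\iota_v:X_v\to\mathcal{A}_v$ sends $\cdots e_{v_{-3},v_{-2},i_{-2}}e_{v_{-2},v_{-1},i_{-1}}$ to $(\dots,i_{-2},i_{-1})$. $C_v:\mathcal{A}_v\to\mathbb{R}/\mathbb{Z}$ is $C_v(\dots,i_{-2},i_{-1})=\sum_{k=-1}^{-\infty}\frac{i_k}{A_{v[k,-1]}}\bmod 1$. *)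

theory Defs
  imports Complex_Main
begin

text \<open>Vertices are 1..N.  An edge e_{i,j,m} is the triple (i,j,m), with range i, source j.\<close>

type_synonym edge = "nat \<times> nat \<times> nat"

definition edge_r :: "edge \<Rightarrow> nat" where "edge_r e = fst e"
definition edge_s :: "edge \<Rightarrow> nat" where "edge_s e = fst (snd e)"
definition edge_lab :: "edge \<Rightarrow> nat" where "edge_lab e = snd (snd e)"

definition edge_in :: "nat \<Rightarrow> (nat \<Rightarrow> nat \<Rightarrow> nat) \<Rightarrow> edge \<Rightarrow> bool" where
  "edge_in N A e \<longleftrightarrow> edge_r e \<in> {1..N} \<and> edge_s e \<in> {1..N} \<and> edge_lab e < A (edge_r e) (edge_s e)"

definition katsura_pair :: "nat \<Rightarrow> (nat \<Rightarrow> nat \<Rightarrow> nat) \<Rightarrow> (nat \<Rightarrow> nat \<Rightarrow> int) \<Rightarrow> bool" where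
  "katsura_pair N A B \<longleftrightarrow> (\<forall>i\<in>{1..N}. \<forall>j\<in>{1..N}. A i j = 0 \<longrightarrow> B i j = 0)"

text \<open>a_i^k . e_{i,j,m} = e_{i,j,mhat}, a_i^k|_e = a_j^{khat}, where k B_ij + m = khat A_ij + mhat.
  The output is the pair (new edge, khat).\<close>
definition act_edge :: "(nat \<Rightarrow> nat \<Rightarrow> nat) \<Rightarrow> (nat \<Rightarrow> nat \<Rightarrow> int) \<Rightarrow> int \<Rightarrow> edge \<Rightarrow> edge \<times> int" where
  "act_edge A B k e =
     (let i = edge_r e; j = edge_s e; t = k * B i j + int (edge_lab e)
      in ((i, j, nat (t mod int (A i j))), t div int (A i j)))"

text \<open>The vertex of the group element
  is implicit (it is d(g) = r(first edge)); only the integer k is tracked.\<close>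
fun act_path :: "(nat \<Rightarrow> nat \<Rightarrow> nat) \<Rightarrow> (nat \<Rightarrow> nat \<Rightarrow> int) \<Rightarrow> int \<Rightarrow> edge list \<Rightarrow> edge list" where
  "act_path A B k [] = []"
| "act_path A B k (e # mu) = fst (act_edge A B k e) # act_path A B (snd (act_edge A B k e)) mu"

fun res_path :: "(nat \<Rightarrow> nat \<Rightarrow> nat) \<Rightarrow> (nat \<Rightarrow> nat \<Rightarrow> int) \<Rightarrow> int \<Rightarrow> edge list \<Rightarrow> int" where
  "res_path A B k [] = k"
| "res_path A B k (e # mu) = res_path A B (snd (act_edge A B k e)) mu"

definition fin_path :: "nat \<Rightarrow> (nat \<Rightarrow> nat \<Rightarrow> nat) \<Rightarrow> edge list \<Rightarrow> bool" where
  "fin_path N A mu \<longleftrightarrow> (\<forall>e\<in>set mu. edge_in N A e) \<and> successively (\<lambda>e f. edge_s e = edge_r f) mu"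

text \<open>Elements of the bundle Z x E^0 are pairs (k,i) = a_i^k.  G_B is the faithful quotient:
  a_i^k and a_i^l are identified iff they act identically on all finite paths with range i.\<close>
definition GB_carrier :: "nat \<Rightarrow> (int \<times> nat) set" where
  "GB_carrier N = {(k, i). i \<in> {1..N}}"

definition GB_equiv :: "nat \<Rightarrow> (nat \<Rightarrow> nat \<Rightarrow> nat) \<Rightarrow> (nat \<Rightarrow> nat \<Rightarrow> int) \<Rightarrow> int \<times> nat \<Rightarrow> int \<times> nat \<Rightarrow> bool" where
  "GB_equiv N A B g h \<longleftrightarrow> snd g = snd h \<and> snd g \<in> {1..N} \<and>
     (\<forall>mu. fin_path N A mu \<and> mu \<noteq> [] \<and> edge_r (hd mu) = snd g \<longrightarrow>
            act_path A B (fst g) mu = act_path A B (fst h) mu)"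

definition regular :: "nat \<Rightarrow> (nat \<Rightarrow> nat \<Rightarrow> nat) \<Rightarrow> (nat \<Rightarrow> nat \<Rightarrow> int) \<Rightarrow> bool" where
  "regular N A B \<longleftrightarrow> (\<forall>g\<in>GB_carrier N. \<exists>K::nat. \<forall>mu.
      fin_path N A mu \<and> mu \<noteq> [] \<and> edge_r (hd mu) = snd g \<and> length mu \<ge> K \<and>
      act_path A B (fst g) mu = mu \<longrightarrow>
      GB_equiv N A B (res_path A B (fst g) mu, edge_s (last mu)) (0, edge_s (last mu)))"

text \<open>Left-infinite paths ... mu_{-2} mu_{-1}, indexed by negative integers (values at
  nonnegative indices are irrelevant).\<close>
definition left_inf_path :: "nat \<Rightarrow> (nat \<Rightarrow> nat \<Rightarrow> nat) \<Rightarrow> (int \<Rightarrow> edge) \<Rightarrow> bool" where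
  "left_inf_path N A mu \<longleftrightarrow> (\<forall>k<0. edge_in N A (mu k)) \<and>
      (\<forall>k < -1. edge_s (mu k) = edge_r (mu (k + 1)))"

definition conn :: "(nat \<Rightarrow> nat \<Rightarrow> nat) \<Rightarrow> nat \<Rightarrow> nat \<Rightarrow> nat" where
  "conn A i j = (if A i j > 0 then 1 else 0)"

text \<open>An element of E_C^{-infty}, encoded by its vertex sequence (v_k)_{k \<le> -1}:
  the k-th edge has source v_k and range v_{k-1}.\<close>
definition EC_path :: "nat \<Rightarrow> (nat \<Rightarrow> nat \<Rightarrow> nat) \<Rightarrow> (int \<Rightarrow> nat) \<Rightarrow> bool" where
  "EC_path N A v \<longleftrightarrow> (\<forall>k<0. v k \<in> {1..N} \<and> v (k - 1) \<in> {1..N} \<and> conn A (v (k - 1)) (v k) = 1)"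

definition X_v :: "nat \<Rightarrow> (nat \<Rightarrow> nat \<Rightarrow> nat) \<Rightarrow> (int \<Rightarrow> nat) \<Rightarrow> (int \<Rightarrow> edge) set" where
  "X_v N A v = {mu. left_inf_path N A mu \<and> (\<forall>k<0. edge_s (mu k) = v k)}"

definition iota :: "(int \<Rightarrow> edge) \<Rightarrow> (int \<Rightarrow> nat)" where
  "iota mu = (\<lambda>k. edge_lab (mu k))"

definition Aprod :: "(nat \<Rightarrow> nat \<Rightarrow> nat) \<Rightarrow> (int \<Rightarrow> nat) \<Rightarrow> int \<Rightarrow> nat" where
  "Aprod A v k = (\<Prod>j\<in>{k..-1}. A (v (j - 1)) (v j))"

text \<open>C_v(..., i_{-2}, i_{-1}) = sum_{k=-1}^{-infty} i_k / A_{v[k,-1]} mod 1, represented by its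
  fractional part (the canonical representative in [0,1) of R/Z).  Summation index n
  corresponds to k = -(n+1).\<close>
definition C_v :: "(nat \<Rightarrow> nat \<Rightarrow> nat) \<Rightarrow> (int \<Rightarrow> nat) \<Rightarrow> (int \<Rightarrow> nat) \<Rightarrow> real" where
  "C_v A v a = frac (\<Sum>n. real (a (- int n - 1)) / real (Aprod A v (- int n - 1)))"

text \<open>Asymptotic equivalence: a finite F \<subseteq> G_B (given by representatives) and g_n \<in> F, n<0,
  with d(g_n) = r(mu_n) and g_n . mu_n ... mu_{-1} = nu_n ... nu_{-1}.\<close>
definition ae_equiv :: "nat \<Rightarrow> (nat \<Rightarrow> nat \<Rightarrow> nat) \<Rightarrow> (nat \<Rightarrow> nat \<Rightarrow> int) \<Rightarrow> (int \<Rightarrow> edge) \<Rightarrow> (int \<Rightarrow> edge) \<Rightarrow> bool" where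
  "ae_equiv N A B mu nu \<longleftrightarrow> (\<exists>F g. finite F \<and> F \<subseteq> GB_carrier N \<and>
      (\<forall>n<0. g n \<in> F \<and> snd (g n) = edge_r (mu n) \<and>
             act_path A B (fst (g n)) (map mu [n..-1]) = map nu [n..-1]))"

end

theory Submission
  imports Defs "HOL-Number_Theory.Cong" "HOL-Analysis.Elementary_Normed_Spaces"
begin

(* Along v every edge has B = 1, so a_i^k acts on a path mu_n ... mu_{-1} as an odometer: it adds k
   to the integer whose mixed-radix digits are the labels (mu_n least significant, radices the
   multiplicities A), and the restriction is the carry.  Hence mu ~ae nu iff at every level m the
   integers V_m(mu), V_m(nu) of the segments of length m differ by a uniformly bounded offset
   modulo the product Q_m of the radices.  Now V_m / Q_m is the m-th partial sum of the series
   defining C_v, whose tail is at most 1 / Q_m; so an integer difference C_v(mu) - C_v(nu) gives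
   offsets in {-1, 0, 1}, and bounded offsets put C_v(mu) - C_v(nu) within O(1 / Q_m) of an
   integer.  This suffices because regularity forces Q_m to be unbounded unless all radices
   are 1: after a radix >= 2 there cannot be a tail of radices 1, for a^1 would fix arbitrarily
   long such paths with restriction a^1, hence be trivial, while it moves the edge of
   radix >= 2. *)

section \<open>The action of edges with B = 1 as an odometer\<close>

definition edge_radix :: "(nat \<Rightarrow> nat \<Rightarrow> nat) \<Rightarrow> edge \<Rightarrow> nat" where
  "edge_radix A e = A (edge_r e) (edge_s e)"

definition odometer_edge :: "(nat \<Rightarrow> nat \<Rightarrow> nat) \<Rightarrow> (nat \<Rightarrow> nat \<Rightarrow> int) \<Rightarrow> edge \<Rightarrow> bool" where
  "odometer_edge A B e \<longleftrightarrow> edge_lab e < edge_radix A e \<and> B (edge_r e) (edge_s e) = 1"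

fun path_value :: "(nat \<Rightarrow> nat \<Rightarrow> nat) \<Rightarrow> edge list \<Rightarrow> int" where
  "path_value A [] = 0"
| "path_value A (e # es) = int (edge_lab e) + int (edge_radix A e) * path_value A es"

definition path_radix :: "(nat \<Rightarrow> nat \<Rightarrow> nat) \<Rightarrow> edge list \<Rightarrow> int" where
  "path_radix A es = (\<Prod>e\<leftarrow>es. int (edge_radix A e))"

lemma path_radix_simps [simp]:
  "path_radix A [] = 1"
  "path_radix A (e # es) = int (edge_radix A e) * path_radix A es"
  by (simp_all add: path_radix_def)

lemma path_radix_eq:
  assumes "map edge_r es = map edge_r fs" "map edge_s es = map edge_s fs"
  shows "path_radix A es = path_radix A fs"
  using assms
proof (induction es arbitrary: fs)
  case (Cons e es)
  then obtain f fs' where "fs = f # fs'" by (cases fs) auto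
  with Cons show ?case by (simp add: edge_radix_def)
qed simp

lemma act_edge_odometer:
  assumes "odometer_edge A B e"
  shows "act_edge A B k e =
    ((edge_r e, edge_s e, nat ((k + int (edge_lab e)) mod int (edge_radix A e))),
     (k + int (edge_lab e)) div int (edge_radix A e))"
  using assms by (simp add: act_edge_def odometer_edge_def edge_radix_def Let_def)

lemma map_edge_r_act_path [simp]: "map edge_r (act_path A B k es) = map edge_r es"
  by (induction es arbitrary: k) (simp_all add: act_edge_def Let_def edge_r_def)

lemma map_edge_s_act_path [simp]: "map edge_s (act_path A B k es) = map edge_s es"
  by (induction es arbitrary: k) (simp_all add: act_edge_def Let_def edge_r_def edge_s_def)

lemma odometer_edges_act_path:
  assumes "\<forall>e\<in>set es. odometer_edge A B e"
  shows "\<forall>e\<in>set (act_path A B k es). odometer_edge A B e"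
  using assms
proof (induction es arbitrary: k)
  case (Cons e es)
  define t where "t = k + int (edge_lab e)"
  have "odometer_edge A B e" using Cons.prems by simp
  then have "odometer_edge A B (edge_r e, edge_s e, nat (t mod int (edge_radix A e)))"
    by (auto simp: odometer_edge_def edge_radix_def edge_r_def edge_s_def edge_lab_def nat_less_iff)
  with Cons show ?case by (simp add: act_edge_odometer t_def)
qed simp

lemma path_value_bounds:
  assumes "\<forall>e\<in>set es. odometer_edge A B e"
  shows "0 \<le> path_value A es" "path_value A es < path_radix A es"
proof -
  have "0 \<le> path_value A es \<and> path_value A es < path_radix A es"
    using assms
  proof (induction es)
    case (Cons e es)
    define a where "a = int (edge_radix A e)"
    have "int (edge_lab e) + 1 \<le> a" "0 \<le> path_value A es" "path_value A es + 1 \<le> path_radix A es"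
      using Cons by (auto simp: odometer_edge_def a_def)
    moreover from this have "a * (path_value A es + 1) \<le> a * path_radix A es"
      by (intro mult_left_mono) auto
    ultimately show ?case by (simp add: a_def[symmetric] algebra_simps)
  qed simp
  then show "0 \<le> path_value A es" "path_value A es < path_radix A es" by auto
qed

lemma path_value_act_path:
  assumes "\<forall>e\<in>set es. odometer_edge A B e"
  shows "path_value A (act_path A B k es) = (k + path_value A es) mod path_radix A es"
  using assms
proof (induction es arbitrary: k)
  case (Cons e es)
  define a where "a = int (edge_radix A e)"
  define t where "t = k + int (edge_lab e)"
  have "0 < a" using Cons.prems by (simp add: odometer_edge_def a_def)
  have "0 \<le> path_radix A es" using path_value_bounds[of es A B] Cons.prems by force
  have "path_value A (act_path A B k (e # es)) = t mod a + a * ((t div a + path_value A es) mod path_radix A es)"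
    using Cons \<open>0 < a\<close>
    by (simp add: act_edge_odometer a_def t_def edge_radix_def edge_r_def edge_s_def edge_lab_def)
  also have "\<dots> = (t + a * path_value A es) mod (a * path_radix A es)"
    using \<open>0 < a\<close> by (simp add: zmod_zmult2_eq[OF \<open>0 \<le> path_radix A es\<close>] add.commute)
  finally show ?case by (simp add: a_def t_def algebra_simps)
qed simp

lemma res_path_odometer:
  assumes "\<forall>e\<in>set es. odometer_edge A B e"
  shows "res_path A B k es = (k + path_value A es) div path_radix A es"
  using assms
proof (induction es arbitrary: k)
  case (Cons e es)
  define a where "a = int (edge_radix A e)"
  define t where "t = k + int (edge_lab e)"
  have "0 < a" using Cons.prems by (simp add: odometer_edge_def a_def)
  have "0 \<le> path_radix A es" using path_value_bounds[of es A B] Cons.prems by force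
  have "res_path A B k (e # es) = (t div a + path_value A es) div path_radix A es"
    using Cons by (simp add: act_edge_odometer a_def t_def)
  also have "\<dots> = (t + a * path_value A es) div (a * path_radix A es)"
    using \<open>0 < a\<close> by (simp add: zdiv_zmult2_eq[OF \<open>0 \<le> path_radix A es\<close>] add.commute)
  finally show ?case by (simp add: a_def t_def algebra_simps)
qed simp

lemma path_value_inj:
  assumes "\<forall>e\<in>set es. odometer_edge A B e" "\<forall>e\<in>set fs. odometer_edge A B e"
    and "map edge_r es = map edge_r fs" "map edge_s es = map edge_s fs"
    and "path_value A es = path_value A fs"
  shows "es = fs"
  using assms
proof (induction es arbitrary: fs)
  case (Cons e es)
  then obtain f fs' where fs: "fs = f # fs'" by (cases fs) auto
  define a where "a = int (edge_radix A e)"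
  have ends: "edge_r f = edge_r e" "edge_s f = edge_s e" using Cons.prems fs by auto
  then have "edge_radix A f = edge_radix A e" by (simp add: edge_radix_def)
  then have val: "int (edge_lab e) + a * path_value A es = int (edge_lab f) + a * path_value A fs'"
    using Cons.prems(5) fs by (simp add: a_def)
  have digits: "int (edge_lab e) < a" "int (edge_lab f) < a"
    using Cons.prems fs \<open>edge_radix A f = edge_radix A e\<close> by (auto simp: odometer_edge_def a_def)
  from arg_cong[OF val, of "\<lambda>x. x mod a"] have "edge_lab e = edge_lab f"
    using digits by simp
  with val digits have "path_value A es = path_value A fs'" by simp
  with Cons have "es = fs'" using fs by auto
  moreover have "e = f"
    using ends \<open>edge_lab e = edge_lab f\<close> by (simp add: edge_r_def edge_s_def edge_lab_def prod_eq_iff)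
  ultimately show ?case using fs by simp
qed simp

lemma act_path_eq_iff_cong:
  assumes "\<forall>e\<in>set es. odometer_edge A B e" "\<forall>e\<in>set fs. odometer_edge A B e"
    and "map edge_r es = map edge_r fs" "map edge_s es = map edge_s fs"
  shows "act_path A B k es = fs \<longleftrightarrow> [path_value A fs = k + path_value A es] (mod path_radix A es)"
proof
  assume "act_path A B k es = fs"
  then show "[path_value A fs = k + path_value A es] (mod path_radix A es)"
    using path_value_act_path[OF assms(1)] by (auto simp: cong_def)
next
  assume "[path_value A fs = k + path_value A es] (mod path_radix A es)"
  moreover have "path_radix A fs = path_radix A es" using path_radix_eq assms(3,4) by metis
  ultimately have "path_value A (act_path A B k es) = path_value A fs"
    using path_value_act_path[OF assms(1)] path_value_bounds[OF assms(2)] by (simp add: cong_def)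
  then show "act_path A B k es = fs"
    using assms odometer_edges_act_path[OF assms(1)] by (intro path_value_inj) auto
qed

lemma act_path_fixes_iff_dvd:
  assumes "\<forall>e\<in>set es. odometer_edge A B e"
  shows "act_path A B k es = es \<longleftrightarrow> path_radix A es dvd k"
  using act_path_eq_iff_cong[OF assms assms] by (simp add: cong_iff_dvd_diff)

section \<open>Mixed-radix expansions\<close>

definition radix_prod :: "(nat \<Rightarrow> nat) \<Rightarrow> nat \<Rightarrow> nat" where
  "radix_prod a m = (\<Prod>i<m. a i)"

fun digits_value :: "(nat \<Rightarrow> nat) \<Rightarrow> (nat \<Rightarrow> nat) \<Rightarrow> nat \<Rightarrow> nat" where
  "digits_value a d 0 = 0"
| "digits_value a d (Suc m) = d m + a m * digits_value a d m"

definition mixed_radix_sum :: "(nat \<Rightarrow> nat) \<Rightarrow> (nat \<Rightarrow> nat) \<Rightarrow> real" where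
  "mixed_radix_sum a d = (\<Sum>i. real (d i) / real (radix_prod a (Suc i)))"

lemma radix_prod_0 [simp]: "radix_prod a 0 = 1"
  and radix_prod_Suc [simp]: "radix_prod a (Suc m) = a m * radix_prod a m"
  by (simp_all add: radix_prod_def)

lemma radix_prod_pos: "(\<And>i. 0 < a i) \<Longrightarrow> 0 < radix_prod a m"
  by (simp add: radix_prod_def)

lemma radix_prod_mono:
  assumes "\<And>i. 0 < a i" "m \<le> n"
  shows "radix_prod a m \<le> radix_prod a n"
proof (rule dvd_imp_le)
  show "radix_prod a m dvd radix_prod a n"
    unfolding radix_prod_def using assms(2) by (intro prod_dvd_prod_subset) auto
qed (use radix_prod_pos assms(1) in blast)

lemma radix_prod_unbounded:
  assumes "\<And>i. 0 < a i" "infinite {i. 2 \<le> a i}"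
  shows "\<exists>m. b < radix_prod a m"
proof -
  have "\<exists>m. 2 ^ r \<le> radix_prod a m" for r
  proof (induction r)
    case 0
    show ?case by (rule exI[of _ 0]) simp
  next
    case (Suc r)
    then obtain m where m: "2 ^ r \<le> radix_prod a m" by blast
    obtain j where "m \<le> j" "2 \<le> a j"
      using assms(2) unfolding infinite_nat_iff_unbounded_le by blast
    moreover have "radix_prod a m \<le> radix_prod a j" using radix_prod_mono assms(1) \<open>m \<le> j\<close> by blast
    ultimately have "2 ^ Suc r \<le> radix_prod a (Suc j)" using m by (simp add: mult_le_mono)
    then show ?case by blast
  qed
  then obtain m where "2 ^ b \<le> radix_prod a m" by blast
  moreover have "b < 2 ^ b" by (rule less_exp)
  ultimately show ?thesis by (intro exI[of _ m]) linarith
qed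

lemma digits_value_eq_partial_sum:
  assumes "\<And>i. 0 < a i"
  shows "real (digits_value a d m) = real (radix_prod a m) * (\<Sum>i<m. real (d i) / real (radix_prod a (Suc i)))"
proof (induction m)
  case (Suc m)
  have "0 < radix_prod a m" "0 < a m" using radix_prod_pos assms by blast+
  with Suc show ?case by (simp add: field_simps)
qed simp

lemma mixed_radix_tail_partial_le:
  assumes "\<And>i. d i < a i"
  shows "(\<Sum>i<n. real (d (i + m)) / real (radix_prod a (Suc (i + m)))) \<le> 1 / real (radix_prod a m)"
proof -
  have "0 < a i" for i using assms[of i] by linarith
  then have pos: "0 < radix_prod a j" for j by (rule radix_prod_pos)
  have term_le: "real (d j) / real (radix_prod a (Suc j)) \<le> 1 / radix_prod a j - 1 / radix_prod a (Suc j)" for j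
  proof -
    have "real (d j) \<le> real (a j) - 1" using assms[of j] by linarith
    then have "real (d j) / real (radix_prod a (Suc j)) \<le> (real (a j) - 1) / (real (a j) * radix_prod a j)"
      using pos[of "Suc j"] by (simp add: divide_right_mono)
    also have "\<dots> = 1 / radix_prod a j - 1 / radix_prod a (Suc j)"
      using pos[of j] pos[of "Suc j"] by (simp add: field_simps)
    finally show ?thesis .
  qed
  have "(\<Sum>i<n. real (d (i + m)) / real (radix_prod a (Suc (i + m))))
      \<le> (\<Sum>i<n. 1 / real (radix_prod a (i + m)) - 1 / real (radix_prod a (Suc i + m)))"
    by (intro sum_mono) (use term_le in simp)
  also have "\<dots> = 1 / real (radix_prod a m) - 1 / real (radix_prod a (n + m))"
    using sum_lessThan_telescope'[of "\<lambda>i. 1 / real (radix_prod a (i + m))" n] by simp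
  also have "\<dots> \<le> 1 / real (radix_prod a m)" by simp
  finally show ?thesis .
qed

lemma summable_mixed_radix:
  assumes "\<And>i. d i < a i"
  shows "summable (\<lambda>i. real (d i) / real (radix_prod a (Suc i)))"
proof (rule bounded_imp_summable)
  show "(\<Sum>i\<le>n. real (d i) / real (radix_prod a (Suc i))) \<le> 1" for n
    using mixed_radix_tail_partial_le[OF assms, where n = "Suc n" and m = 0] by (simp add: lessThan_Suc_atMost)
qed simp

lemma mixed_radix_sum_partial_bounds:
  assumes "\<And>i. d i < a i"
  shows "(\<Sum>i<m. real (d i) / real (radix_prod a (Suc i))) \<le> mixed_radix_sum a d"
    and "mixed_radix_sum a d \<le> (\<Sum>i<m. real (d i) / real (radix_prod a (Suc i))) + 1 / real (radix_prod a m)"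
proof -
  have sums: "summable (\<lambda>i. real (d (i + m)) / real (radix_prod a (Suc (i + m))))"
    using summable_mixed_radix[OF assms] by (rule summable_ignore_initial_segment)
  have split: "mixed_radix_sum a d = (\<Sum>i. real (d (i + m)) / real (radix_prod a (Suc (i + m))))
      + (\<Sum>i<m. real (d i) / real (radix_prod a (Suc i)))"
    using suminf_split_initial_segment[OF summable_mixed_radix[OF assms]] by (simp add: mixed_radix_sum_def)
  have "0 \<le> (\<Sum>i. real (d (i + m)) / real (radix_prod a (Suc (i + m))))"
    by (intro suminf_nonneg sums) simp
  then show "(\<Sum>i<m. real (d i) / real (radix_prod a (Suc i))) \<le> mixed_radix_sum a d"
    using split by linarith
  have "(\<Sum>i. real (d (i + m)) / real (radix_prod a (Suc (i + m)))) \<le> 1 / real (radix_prod a m)"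
    by (intro suminf_le_const sums mixed_radix_tail_partial_le assms)
  then show "mixed_radix_sum a d \<le> (\<Sum>i<m. real (d i) / real (radix_prod a (Suc i))) + 1 / real (radix_prod a m)"
    using split by linarith
qed

lemma mixed_radix_sum_diff_approx:
  assumes "\<And>i. d1 i < a i" "\<And>i. d2 i < a i"
  shows "\<bar>(mixed_radix_sum a d2 - mixed_radix_sum a d1) * radix_prod a m
          - (real (digits_value a d2 m) - real (digits_value a d1 m))\<bar> \<le> 1"
proof -
  have "0 < a i" for i using assms(1)[of i] by linarith
  then have Q: "0 < real (radix_prod a m)" by (simp add: radix_prod_pos)
  define P1 where "P1 = (\<Sum>i<m. real (d1 i) / real (radix_prod a (Suc i)))"
  define P2 where "P2 = (\<Sum>i<m. real (d2 i) / real (radix_prod a (Suc i)))"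
  have V: "real (digits_value a d1 m) = radix_prod a m * P1" "real (digits_value a d2 m) = radix_prod a m * P2"
    unfolding P1_def P2_def using digits_value_eq_partial_sum \<open>\<And>i. 0 < a i\<close> by blast+
  define D where "D = (mixed_radix_sum a d2 - P2) - (mixed_radix_sum a d1 - P1)"
  have "(mixed_radix_sum a d2 - mixed_radix_sum a d1) * radix_prod a m
          - (real (digits_value a d2 m) - real (digits_value a d1 m)) = D * radix_prod a m"
    by (simp add: V D_def algebra_simps)
  moreover have "\<bar>D\<bar> \<le> 1 / real (radix_prod a m)"
    using mixed_radix_sum_partial_bounds[of d1 a m, OF assms(1)] mixed_radix_sum_partial_bounds[of d2 a m, OF assms(2)]
    unfolding D_def P1_def P2_def by linarith
  then have "\<bar>D * radix_prod a m\<bar> \<le> 1"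
    using Q by (simp add: abs_mult pos_divide_le_eq pos_le_divide_eq)
  ultimately show ?thesis by simp
qed

definition bounded_offsets :: "(nat \<Rightarrow> nat) \<Rightarrow> (nat \<Rightarrow> nat) \<Rightarrow> (nat \<Rightarrow> nat) \<Rightarrow> bool" where
  "bounded_offsets a d1 d2 \<longleftrightarrow> (\<exists>K. \<forall>m. \<exists>k. \<bar>k\<bar> \<le> K \<and>
     [int (digits_value a d2 m) = k + int (digits_value a d1 m)] (mod int (radix_prod a m)))"

lemma bounded_offsets_if_frac_eq:
  assumes "\<And>i. d1 i < a i" "\<And>i. d2 i < a i"
    and "frac (mixed_radix_sum a d1) = frac (mixed_radix_sum a d2)"
  shows "bounded_offsets a d1 d2"
  unfolding bounded_offsets_def
proof (rule exI[of _ "1::int"], rule allI)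
  fix m
  obtain z where z: "mixed_radix_sum a d2 = mixed_radix_sum a d1 + of_int z"
    using assms(3) by (metis frac_eqE)
  define k where "k = int (digits_value a d2 m) - int (digits_value a d1 m) - z * int (radix_prod a m)"
  have "\<bar>real_of_int k\<bar> \<le> 1"
    using mixed_radix_sum_diff_approx[of d1 a d2 m, OF assms(1,2)] by (simp add: z k_def algebra_simps)
  then have "\<bar>k\<bar> \<le> 1" by linarith
  moreover have "[int (digits_value a d2 m) = k + int (digits_value a d1 m)] (mod int (radix_prod a m))"
    by (simp add: cong_iff_dvd_diff k_def)
  ultimately show "\<exists>k. \<bar>k\<bar> \<le> 1 \<and>
      [int (digits_value a d2 m) = k + int (digits_value a d1 m)] (mod int (radix_prod a m))" by blast
qed

lemma frac_eq_if_bounded_offsets: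
  assumes "\<And>i. d1 i < a i" "\<And>i. d2 i < a i"
    and unbounded: "\<And>b. \<exists>m. b < radix_prod a m"
    and "bounded_offsets a d1 d2"
  shows "frac (mixed_radix_sum a d1) = frac (mixed_radix_sum a d2)"
proof -
  obtain K where K: "\<And>m. \<exists>k. \<bar>k\<bar> \<le> K \<and>
      [int (digits_value a d2 m) = k + int (digits_value a d1 m)] (mod int (radix_prod a m))"
    using assms(4) unfolding bounded_offsets_def by blast
  define x where "x = mixed_radix_sum a d2 - mixed_radix_sum a d1"
  have "\<exists>y\<in>\<int>. dist y x < e" if "0 < e" for e
  proof -
    obtain m where "nat \<lceil>(real_of_int K + 1) / e\<rceil> < radix_prod a m" using unbounded by blast
    then have "(real_of_int K + 1) / e < radix_prod a m" by linarith
    then have Ke: "real_of_int K + 1 < e * radix_prod a m"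
      using \<open>0 < e\<close> by (simp add: pos_divide_less_eq mult.commute)
    obtain k where k: "\<bar>k\<bar> \<le> K"
      "[int (digits_value a d2 m) = k + int (digits_value a d1 m)] (mod int (radix_prod a m))"
      using K by blast
    from cong_sym[OF k(2)] obtain z
      where "int (digits_value a d2 m) = k + int (digits_value a d1 m) + int (radix_prod a m) * z"
      unfolding cong_iff_lin by blast
    from arg_cong[where f = real_of_int, OF this]
    have "real (digits_value a d2 m) - real (digits_value a d1 m) = of_int k + real (radix_prod a m) * of_int z"
      by simp
    then have "(x - of_int z) * radix_prod a m - of_int k
        = x * radix_prod a m - (real (digits_value a d2 m) - real (digits_value a d1 m))"
      by (simp add: algebra_simps)
    then have "\<bar>(x - of_int z) * radix_prod a m - of_int k\<bar> \<le> 1"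
      using mixed_radix_sum_diff_approx[of d1 a d2 m, OF assms(1,2)] by (simp add: x_def)
    then have "\<bar>x - of_int z\<bar> * radix_prod a m \<le> real_of_int K + 1"
      using k(1) by (simp add: abs_mult[symmetric])
    then have "\<bar>x - of_int z\<bar> * radix_prod a m < e * radix_prod a m" using Ke by linarith
    then have "\<bar>x - of_int z\<bar> < e" by (simp add: mult_less_cancel_right)
    then show ?thesis by (intro bexI[of _ "of_int z"]) (simp_all add: dist_real_def abs_minus_commute)
  qed
  then have "x \<in> \<int>" using closed_approachable[OF closed_Ints] by blast
  then show ?thesis unfolding x_def by (metis frac_add_int_right add.commute diff_add_cancel)
qed

lemma frac_mixed_radix_sum_eq_iff:
  assumes "\<And>i. d1 i < a i" "\<And>i. d2 i < a i"
    and "(\<forall>i. a i = 1) \<or> (\<forall>b. \<exists>m. b < radix_prod a m)"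
  shows "frac (mixed_radix_sum a d1) = frac (mixed_radix_sum a d2) \<longleftrightarrow> bounded_offsets a d1 d2"
proof
  assume "frac (mixed_radix_sum a d1) = frac (mixed_radix_sum a d2)"
  then show "bounded_offsets a d1 d2" using bounded_offsets_if_frac_eq assms(1,2) by blast
next
  assume "bounded_offsets a d1 d2"
  from assms(3) show "frac (mixed_radix_sum a d1) = frac (mixed_radix_sum a d2)"
  proof
    assume "\<forall>i. a i = 1"
    then have "d1 = d2" using assms(1,2) by (metis less_one ext)
    then show ?thesis by simp
  next
    assume "\<forall>b. \<exists>m. b < radix_prod a m"
    then show ?thesis using frac_eq_if_bounded_offsets assms(1,2) \<open>bounded_offsets a d1 d2\<close> by blast
  qed
qed

section \<open>Regularity forces unbounded radix products\<close>

lemma regular_uniform_bound: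
  assumes "regular N A B"
  obtains K where "\<And>p. fin_path N A p \<Longrightarrow> p \<noteq> [] \<Longrightarrow> K \<le> length p \<Longrightarrow> act_path A B k p = p \<Longrightarrow>
    GB_equiv N A B (res_path A B k p, edge_s (last p)) (0, edge_s (last p))"
proof -
  have "\<forall>w\<in>{1..N}. \<exists>K. \<forall>p. fin_path N A p \<and> p \<noteq> [] \<and> edge_r (hd p) = w \<and> K \<le> length p \<and>
      act_path A B k p = p \<longrightarrow> GB_equiv N A B (res_path A B k p, edge_s (last p)) (0, edge_s (last p))"
    using assms unfolding regular_def GB_carrier_def by fastforce
  then obtain f where f: "\<forall>w\<in>{1..N}. \<forall>p. fin_path N A p \<and> p \<noteq> [] \<and> edge_r (hd p) = w \<and>
      f w \<le> length p \<and> act_path A B k p = p \<longrightarrow>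
      GB_equiv N A B (res_path A B k p, edge_s (last p)) (0, edge_s (last p))"
    by (metis bchoice)
  show thesis
  proof (rule that[of "\<Sum>w\<in>{1..N}. f w"])
    fix p assume p: "fin_path N A p" "p \<noteq> []" "(\<Sum>w\<in>{1..N}. f w) \<le> length p" "act_path A B k p = p"
    then have w: "edge_r (hd p) \<in> {1..N}" by (simp add: fin_path_def edge_in_def)
    then have "f (edge_r (hd p)) \<le> length p" using p(3) member_le_sum[of _ "{1..N}" f] by fastforce
    then show "GB_equiv N A B (res_path A B k p, edge_s (last p)) (0, edge_s (last p))"
      using f w p by blast
  qed
qed

lemma fin_path_descending:
  assumes "\<And>i. edge_in N A (E i)" "\<And>i. edge_s (E (Suc i)) = edge_r (E i)"
  shows "fin_path N A (map E (rev [lo..<hi]))"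
proof -
  have "successively (\<lambda>x y. edge_s (E y) = edge_r (E x)) [lo..<hi]"
    using assms(2) by (simp add: successively_conv_nth)
  then show ?thesis
    using assms(1) unfolding fin_path_def rev_map[symmetric] successively_rev successively_map by simp
qed

lemma path_radix_eq_1: "\<forall>e\<in>set es. edge_radix A e = 1 \<Longrightarrow> path_radix A es = 1"
  by (induction es) auto

lemma regular_radix_not_eventually_one:
  assumes "regular N A B"
    and E: "\<And>i. edge_in N A (E i)" "\<And>i. edge_s (E (Suc i)) = edge_r (E i)" "\<And>i. odometer_edge A B (E i)"
    and "2 \<le> edge_radix A (E i0)"
  shows "\<exists>i>i0. edge_radix A (E i) \<noteq> 1"
proof (rule ccontr)
  assume "\<not> (\<exists>i>i0. edge_radix A (E i) \<noteq> 1)"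
  then have ones: "edge_radix A (E i) = 1" if "i0 < i" for i using that by blast
  obtain K where K: "\<And>p. fin_path N A p \<Longrightarrow> p \<noteq> [] \<Longrightarrow> K \<le> length p \<Longrightarrow> act_path A B 1 p = p \<Longrightarrow>
      GB_equiv N A B (res_path A B 1 p, edge_s (last p)) (0, edge_s (last p))"
    using regular_uniform_bound[OF assms(1)] by blast
  define p where "p = map E (rev [Suc i0..<Suc i0 + Suc K])"
  have odo: "\<forall>e\<in>set p. odometer_edge A B e" using E(3) by (simp add: p_def)
  have "path_radix A p = 1" using ones by (intro path_radix_eq_1) (auto simp: p_def)
  moreover have "path_value A p = 0" using path_value_bounds[OF odo] calculation by simp
  ultimately have "act_path A B 1 p = p" "res_path A B 1 p = 1"
    using act_path_fixes_iff_dvd[OF odo] res_path_odometer[OF odo] by simp_all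
  moreover have "fin_path N A p" unfolding p_def using E(1,2) by (rule fin_path_descending)
  moreover have "edge_s (last p) = edge_r (E i0)" using E(2) by (simp add: p_def last_map last_rev del: upt_Suc)
  ultimately have unit: "GB_equiv N A B (1, edge_r (E i0)) (0, edge_r (E i0))"
    using K[of p] by (simp add: p_def)
  have "fin_path N A [E i0]" using E(1) by (simp add: fin_path_def)
  then have "act_path A B 1 [E i0] = act_path A B 0 [E i0]"
    using unit unfolding GB_equiv_def by auto
  also have "\<dots> = [E i0]" using E(3) act_path_fixes_iff_dvd[of "[E i0]" A B 0] by simp
  finally have "int (edge_radix A (E i0)) dvd 1"
    using E(3) act_path_fixes_iff_dvd[of "[E i0]" A B 1] by simp
  with assms(5) show False by simp
qed

lemma regular_radix_dichotomy:
  assumes "regular N A B"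
    and E: "\<And>i. edge_in N A (E i)" "\<And>i. edge_s (E (Suc i)) = edge_r (E i)" "\<And>i. odometer_edge A B (E i)"
  shows "(\<forall>i. edge_radix A (E i) = 1) \<or> (\<forall>b. \<exists>m. b < radix_prod (\<lambda>i. edge_radix A (E i)) m)"
proof (cases "\<forall>i. edge_radix A (E i) = 1")
  case False
  define a where "a = (\<lambda>i. edge_radix A (E i))"
  have pos: "0 < a i" for i using E(3)[of i] by (simp add: odometer_edge_def a_def)
  obtain i0 where "a i0 \<noteq> 1" using False by (auto simp: a_def)
  with pos[of i0] have "i0 \<in> {i. 2 \<le> a i}" by simp
  have "infinite {i. 2 \<le> a i}"
  proof
    assume fin: "finite {i. 2 \<le> a i}"
    define i1 where "i1 = Max {i. 2 \<le> a i}"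
    have "2 \<le> a i1" using Max_in[OF fin] \<open>i0 \<in> {i. 2 \<le> a i}\<close> by (auto simp: i1_def)
    then obtain i where "i1 < i" "a i \<noteq> 1"
      using regular_radix_not_eventually_one[of N A B E i1, OF assms] by (auto simp: a_def)
    then have "i \<in> {i. 2 \<le> a i}" using pos[of i] by simp
    then show False using Max_ge[OF fin] \<open>i1 < i\<close> by (fastforce simp: i1_def)
  qed
  then show ?thesis using radix_prod_unbounded[of a] pos unfolding a_def by blast
qed simp

section \<open>Paths with prescribed vertices\<close>

(* Index i of these sequences stands for position -(i + 1) of a left-infinite path, as in the
   summation index of C_v. *)
definition radix_seq :: "(nat \<Rightarrow> nat \<Rightarrow> nat) \<Rightarrow> (int \<Rightarrow> nat) \<Rightarrow> nat \<Rightarrow> nat" where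
  "radix_seq A v i = A (v (- int i - 2)) (v (- int i - 1))"

definition digit_seq :: "(int \<Rightarrow> nat) \<Rightarrow> nat \<Rightarrow> nat" where
  "digit_seq c i = c (- int i - 1)"

lemma Aprod_eq_radix_prod: "Aprod A v (- int m) = radix_prod (radix_seq A v) m"
proof (induction m)
  case (Suc m)
  have "{- int (Suc m)..-1} = insert (- int m - 1) {- int m..-1}" by auto
  then have "Aprod A v (- int (Suc m)) = A (v (- int m - 2)) (v (- int m - 1)) * Aprod A v (- int m)"
    unfolding Aprod_def by (simp add: algebra_simps)
  with Suc show ?case by (simp add: radix_seq_def)
qed (simp add: Aprod_def)

lemma C_v_eq_frac_mixed_radix_sum: "C_v A v c = frac (mixed_radix_sum (radix_seq A v) (digit_seq c))"
proof -
  have "- int n - 1 = - int (Suc n)" for n by simp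
  then show ?thesis
    unfolding C_v_def mixed_radix_sum_def by (simp only: Aprod_eq_radix_prod digit_seq_def)
qed

lemma X_v_edge:
  assumes "x \<in> X_v N A v" "k < 0"
  shows "edge_in N A (x k)" "edge_s (x k) = v k" "edge_r (x k) = v (k - 1)"
proof -
  have path: "left_inf_path N A x" and src: "\<forall>k<0. edge_s (x k) = v k" using assms(1) by (auto simp: X_v_def)
  show "edge_in N A (x k)" "edge_s (x k) = v k" using path src assms(2) by (auto simp: left_inf_path_def)
  have "edge_s (x (k - 1)) = edge_r (x (k - 1 + 1))" using path assms(2) by (simp add: left_inf_path_def)
  then show "edge_r (x k) = v (k - 1)" using src assms(2) by simp
qed

lemma X_v_odometer_edge:
  assumes "x \<in> X_v N A v" "\<forall>k<0. B (v (k - 1)) (v k) = 1" "k < 0"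
  shows "odometer_edge A B (x k)"
  using X_v_edge[OF assms(1,3)] assms(2,3) by (simp add: odometer_edge_def edge_in_def edge_radix_def)

lemma digit_seq_less_radix_seq:
  assumes "x \<in> X_v N A v"
  shows "digit_seq (iota x) i < radix_seq A v i"
proof -
  have "- int i - 1 < 0" "- int i - 1 - 1 = - int i - 2" by simp_all
  then show ?thesis
    using X_v_edge[OF assms, of "- int i - 1"]
    by (simp add: edge_in_def digit_seq_def iota_def radix_seq_def algebra_simps)
qed

lemma X_v_edge_radix:
  assumes "x \<in> X_v N A v"
  shows "edge_radix A (x (- int i - 1)) = radix_seq A v i"
proof -
  have "- int i - 1 < 0" "- int i - 1 - 1 = - int i - 2" by simp_all
  then show ?thesis
    using X_v_edge[OF assms, of "- int i - 1"] by (simp add: edge_radix_def radix_seq_def algebra_simps)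
qed

lemma regular_radix_seq_dichotomy:
  assumes "regular N A B" "x \<in> X_v N A v" "\<forall>k<0. B (v (k - 1)) (v k) = 1"
  shows "(\<forall>i. radix_seq A v i = 1) \<or> (\<forall>b. \<exists>m. b < radix_prod (radix_seq A v) m)"
proof -
  define E where "E i = x (- int i - 1)" for i
  have "edge_s (E (Suc i)) = edge_r (E i)" for i
  proof -
    have "- int (Suc i) - 1 = - int i - 1 - 1" "- int (Suc i) - 1 < 0" "- int i - 1 < 0" by simp_all
    then show ?thesis using X_v_edge[OF assms(2)] by (simp only: E_def)
  qed
  moreover have "edge_in N A (E i)" "odometer_edge A B (E i)" for i
    using X_v_edge(1)[OF assms(2)] X_v_odometer_edge[OF assms(2,3)] by (simp_all add: E_def)
  ultimately have "(\<forall>i. edge_radix A (E i) = 1) \<or> (\<forall>b. \<exists>m. b < radix_prod (\<lambda>i. edge_radix A (E i)) m)"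
    using regular_radix_dichotomy[of N A B E, OF assms(1)] by blast
  moreover have "(\<lambda>i. edge_radix A (E i)) = radix_seq A v"
    using X_v_edge_radix[OF assms(2)] by (simp add: E_def)
  ultimately show ?thesis by metis
qed

lemma map_upto_minus_Suc: "map x [- int (Suc m)..-1] = x (- int m - 1) # map x [- int m..-1]"
proof -
  have "[- int (Suc m)..-1] = (- int m - 1) # [- int m..-1]" using upto_rec1[of "- int (Suc m)" "-1"] by simp
  then show ?thesis by simp
qed

lemma path_radix_X_v_segment:
  assumes "x \<in> X_v N A v"
  shows "path_radix A (map x [- int m..-1]) = int (radix_prod (radix_seq A v) m)"
proof (induction m)
  case (Suc m)
  then show ?case using X_v_edge_radix[OF assms, of m] unfolding map_upto_minus_Suc by simp
qed simp

lemma path_value_X_v_segment: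
  assumes "x \<in> X_v N A v"
  shows "path_value A (map x [- int m..-1]) = int (digits_value (radix_seq A v) (digit_seq (iota x)) m)"
proof (induction m)
  case (Suc m)
  then show ?case
    using X_v_edge_radix[OF assms, of m] unfolding map_upto_minus_Suc by (simp add: digit_seq_def iota_def)
qed simp

lemma ae_equiv_iff_bounded_offsets:
  assumes mu: "mu \<in> X_v N A v" and nu: "nu \<in> X_v N A v" and B1: "\<forall>k<0. B (v (k - 1)) (v k) = 1"
  shows "ae_equiv N A B mu nu \<longleftrightarrow>
    bounded_offsets (radix_seq A v) (digit_seq (iota mu)) (digit_seq (iota nu))"
    (is "_ \<longleftrightarrow> bounded_offsets ?a ?d1 ?d2")
proof -
  have "edge_r (mu k) = edge_r (nu k)" "edge_s (mu k) = edge_s (nu k)" if "k < 0" for k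
    using X_v_edge[OF mu that] X_v_edge[OF nu that] by simp_all
  then have ends: "map edge_r (map mu [n..-1]) = map edge_r (map nu [n..-1])"
      "map edge_s (map mu [n..-1]) = map edge_s (map nu [n..-1])" for n
    by simp_all
  have "\<forall>e\<in>set (map mu [n..-1]). odometer_edge A B e"
      "\<forall>e\<in>set (map nu [n..-1]). odometer_edge A B e" for n
    using X_v_odometer_edge[OF mu B1] X_v_odometer_edge[OF nu B1] by simp_all
  from act_path_eq_iff_cong[OF this ends]
  have segment: "act_path A B k (map mu [- int m..-1]) = map nu [- int m..-1] \<longleftrightarrow>
      [int (digits_value ?a ?d2 m) = k + int (digits_value ?a ?d1 m)] (mod int (radix_prod ?a m))" for k m
    by (simp add: path_radix_X_v_segment[OF mu] path_value_X_v_segment[OF mu] path_value_X_v_segment[OF nu])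
  show ?thesis
  proof
    assume "ae_equiv N A B mu nu"
    then obtain F :: "(int \<times> nat) set" and g where F: "finite F" and g: "\<forall>n<0. g n \<in> F \<and>
        act_path A B (fst (g n)) (map mu [n..-1]) = map nu [n..-1]"
      unfolding ae_equiv_def by blast
    define K where "K = Max ((\<lambda>h. \<bar>fst h\<bar>) ` F)"
    have bound: "\<bar>fst (g n)\<bar> \<le> K" if "n < 0" for n
      using g that F unfolding K_def by (blast intro: Max_ge)
    have "\<exists>k. \<bar>k\<bar> \<le> K \<and>
        [int (digits_value ?a ?d2 m) = k + int (digits_value ?a ?d1 m)] (mod int (radix_prod ?a m))" for m
    proof (cases "m = 0")
      case True
      then show ?thesis using bound[of "-1"] by auto
    next
      case False
      then have "- int m < 0" by simp
      then show ?thesis using g bound segment by blast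
    qed
    then show "bounded_offsets ?a ?d1 ?d2" unfolding bounded_offsets_def by blast
  next
    assume "bounded_offsets ?a ?d1 ?d2"
    then obtain K where "\<forall>m. \<exists>k. \<bar>k\<bar> \<le> K \<and>
        [int (digits_value ?a ?d2 m) = k + int (digits_value ?a ?d1 m)] (mod int (radix_prod ?a m))"
      unfolding bounded_offsets_def by blast
    from choice[OF this] obtain f where f: "\<And>m. \<bar>f m\<bar> \<le> K \<and>
        [int (digits_value ?a ?d2 m) = f m + int (digits_value ?a ?d1 m)] (mod int (radix_prod ?a m))"
      by blast
    show "ae_equiv N A B mu nu"
      unfolding ae_equiv_def
    proof (intro exI conjI allI impI)
      show "finite ({-K..K} \<times> {1..N})" by simp
      show "{-K..K} \<times> {1..N} \<subseteq> GB_carrier N" by (auto simp: GB_carrier_def)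
      fix n :: int assume "n < 0"
      then have n: "n = - int (nat (- n))" by simp
      show "(f (nat (- n)), edge_r (mu n)) \<in> {-K..K} \<times> {1..N}"
        using f[of "nat (- n)"] X_v_edge(1)[OF mu \<open>n < 0\<close>] by (auto simp: edge_in_def abs_le_iff)
      show "snd (f (nat (- n)), edge_r (mu n)) = edge_r (mu n)" by simp
      have "act_path A B (f (nat (- n))) (map mu [- int (nat (- n))..-1]) = map nu [- int (nat (- n))..-1]"
        using segment f by blast
      then show "act_path A B (fst (f (nat (- n)), edge_r (mu n))) (map mu [n..-1]) = map nu [n..-1]"
        by (simp only: fst_conv n[symmetric])
    qed
  qed
qed

theorem proposition6p3:
  fixes N :: nat and A :: "nat \<Rightarrow> nat \<Rightarrow> nat" and B :: "nat \<Rightarrow> nat \<Rightarrow> int"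
    and v :: "int \<Rightarrow> nat" and mu nu :: "int \<Rightarrow> edge"
  assumes "katsura_pair N A B"
    and "\<forall>i\<in>{1..N}. \<forall>j\<in>{1..N}. B i j \<in> {0, 1}"
    and "regular N A B"
    and "EC_path N A v"
    and "\<forall>k<0. B (v (k - 1)) (v k) = 1"
    and "mu \<in> X_v N A v" and "nu \<in> X_v N A v"
  shows "ae_equiv N A B mu nu \<longleftrightarrow> C_v A v (iota mu) = C_v A v (iota nu)"
proof -
  \<comment> \<open>Only the values of B along v enter.\<close>
  have digits: "\<And>i. digit_seq (iota mu) i < radix_seq A v i" "\<And>i. digit_seq (iota nu) i < radix_seq A v i"
    using digit_seq_less_radix_seq assms(6,7) by blast+
  have "ae_equiv N A B mu nu \<longleftrightarrow> bounded_offsets (radix_seq A v) (digit_seq (iota mu)) (digit_seq (iota nu))"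
    using ae_equiv_iff_bounded_offsets assms(5-7) by blast
  also have "\<dots> \<longleftrightarrow> frac (mixed_radix_sum (radix_seq A v) (digit_seq (iota mu)))
      = frac (mixed_radix_sum (radix_seq A v) (digit_seq (iota nu)))"
    using frac_mixed_radix_sum_eq_iff[OF digits regular_radix_seq_dichotomy[OF assms(3,6,5)]] by simp
  also have "\<dots> \<longleftrightarrow> C_v A v (iota mu) = C_v A v (iota nu)"
    by (simp add: C_v_eq_frac_mixed_radix_sum)
  finally show ?thesis .
qed

end
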